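(* Let $n\ge1$ be an integer. Then $n\equiv 0$ or $1 \pmod 4$ if and only if every permutation $(a_1,\dots,a_n)$ of $\{1,\dots,n\}$ for which the $n-1$ differences $|a_2-a_1|,\dots,|a_n-a_{n-1}|$ are pairwise distinct satisfies $a_1\equiv a_n \pmod 2$. *)

theory Defs
  imports Main
begin

text \<open>A permutation (a_1,...,a_n) of {1..n} is represented as a list of integers
  (0-indexed) whose elements are exactly 1..n, each once.\<close>
definition is_perm_list :: "nat \<Rightarrow> int list \<Rightarrow> bool" where
  "is_perm_list n a \<longleftrightarrow> length a = n \<and> distinct a \<and> set a = {1..int n}"

definition distinct_diffs :: "int list \<Rightarrow> bool" where
  "distinct_diffs a \<longleftrightarrow>
     inj_on (\<lambda>i. \<bar>a ! (Suc i) - a ! i\<bar>) {..<length a - 1}"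

end

theory Submission
  imports Defs
begin

text \<open>Telescoping: since \<open>\<bar>x\<bar> \<equiv> x (mod 2)\<close>, the absolute differences sum to \<open>a\<^sub>n - a\<^sub>1\<close>
  modulo 2. For a permutation with distinct differences these differences are exactly
  \<open>1, \<dots>, n - 1\<close>, whose sum \<open>n(n - 1)/2\<close> is even iff \<open>n \<equiv> 0, 1 (mod 4)\<close>; so the endpoints
  have equal parity precisely in that case. The converse needs one such permutation
  for every \<open>n\<close>, supplied by the zigzag \<open>1, n, 2, n - 1, 3, \<dots>\<close> with differences
  \<open>n - 1, n - 2, \<dots>, 1\<close>.\<close>

lemma even_sum_abs_diff_iff:
  fixes f :: "nat \<Rightarrow> int"
  shows "even (\<Sum>i<m. \<bar>f (Suc i) - f i\<bar>) \<longleftrightarrow> even (f m - f 0)"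
proof -
  have "even ((\<Sum>i<m. \<bar>f (Suc i) - f i\<bar>) - (\<Sum>i<m. f (Suc i) - f i))"
    unfolding sum_subtractf[symmetric] by (rule dvd_sum) (auto simp: abs_if)
  moreover have "(\<Sum>i<m. f (Suc i) - f i) = f m - f 0"
    by (rule sum_lessThan_telescope)
  ultimately show ?thesis
    by (metis dvd_add_right_iff diff_add_cancel)
qed

lemma even_triangular_iff:
  "even (int n * (int n - 1) div 2) \<longleftrightarrow> n mod 4 = 0 \<or> n mod 4 = 1"
proof -
  obtain q r where n: "n = 4 * q + r" and "r < 4"
    using div_mult_mod_eq[of n 4] mod_less_divisor[of 4 n] by (metis mult.commute zero_less_numeral)
  then consider "r = 0" | "r = 1" | "r = 2" | "r = 3" by linarith
  then show ?thesis
    by cases (simp_all add: n algebra_simps, presburger+)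
qed

lemma abs_diffs_image:
  assumes perm: "is_perm_list n a" and diffs: "distinct_diffs a"
  shows "(\<lambda>i. \<bar>a ! Suc i - a ! i\<bar>) ` {..<n - 1} = {1..int n - 1}"
proof (rule card_subset_eq)
  have len: "length a = n" and "distinct a" and vals: "set a = {1..int n}"
    using perm unfolding is_perm_list_def by auto
  show "(\<lambda>i. \<bar>a ! Suc i - a ! i\<bar>) ` {..<n - 1} \<subseteq> {1..int n - 1}"
  proof clarify
    fix i assume "i < n - 1"
    then have "a ! i \<in> {1..int n}" "a ! Suc i \<in> {1..int n}" "a ! i \<noteq> a ! Suc i"
      using len vals \<open>distinct a\<close> by (auto simp: nth_eq_iff_index_eq)
    then show "\<bar>a ! Suc i - a ! i\<bar> \<in> {1..int n - 1}" by auto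
  qed
  have "inj_on (\<lambda>i. \<bar>a ! Suc i - a ! i\<bar>) {..<n - 1}"
    using diffs len unfolding distinct_diffs_def by simp
  then show "card ((\<lambda>i. \<bar>a ! Suc i - a ! i\<bar>) ` {..<n - 1}) = card {1..int n - 1}"
    by (simp add: card_image)
qed simp

lemma sum_abs_diffs:
  assumes perm: "is_perm_list n a" and diffs: "distinct_diffs a"
  shows "(\<Sum>i<n - 1. \<bar>a ! Suc i - a ! i\<bar>) = int n * (int n - 1) div 2"
proof -
  let ?d = "\<lambda>i. \<bar>a ! Suc i - a ! i\<bar>"
  have "inj_on ?d {..<n - 1}"
    using perm diffs unfolding is_perm_list_def distinct_diffs_def by simp
  then have "(\<Sum>i<n - 1. ?d i) = \<Sum>(?d ` {..<n - 1})"
    by (simp add: sum.reindex)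
  also have "\<dots> = \<Sum>{1..int n - 1}"
    by (simp only: abs_diffs_image[OF perm diffs])
  also have "\<dots> = int n * (int n - 1) div 2"
    by (cases "n \<le> 1") (auto simp: Sum_Icc_int algebra_simps le_Suc_eq)
  finally show ?thesis .
qed

lemma endpoints_parity_iff:
  assumes "is_perm_list n a" and "distinct_diffs a" and "n \<ge> 1"
  shows "a ! 0 mod 2 = a ! (n - 1) mod 2 \<longleftrightarrow> n mod 4 = 0 \<or> n mod 4 = 1"
proof -
  have "a ! 0 mod 2 = a ! (n - 1) mod 2 \<longleftrightarrow> even (a ! (n - 1) - a ! 0)"
    by (metis mod_eq_dvd_iff)
  also have "\<dots> \<longleftrightarrow> even (\<Sum>i<n - 1. \<bar>a ! Suc i - a ! i\<bar>)"
    using even_sum_abs_diff_iff[of "(!) a" "n - 1"] by simp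
  also have "\<dots> \<longleftrightarrow> n mod 4 = 0 \<or> n mod 4 = 1"
    using sum_abs_diffs[OF assms(1,2)] even_triangular_iff by simp
  finally show ?thesis .
qed

definition zigzag :: "nat \<Rightarrow> nat \<Rightarrow> int" where
  "zigzag n i = (if even i then int (i div 2) + 1 else int n - int (i div 2))"

lemma zigzag_even [simp]: "zigzag n (2 * k) = int k + 1"
  by (simp add: zigzag_def)

lemma zigzag_odd [simp]: "zigzag n (Suc (2 * k)) = int n - int k"
  by (simp add: zigzag_def)

lemma inj_on_zigzag: "inj_on (zigzag n) {..<n}"
proof
  fix i j assume "i \<in> {..<n}" "j \<in> {..<n}" "zigzag n i = zigzag n j"
  then show "i = j"
    by (cases "even i"; cases "even j") (auto elim!: evenE oddE)
qed

lemma zigzag_range: "i < n \<Longrightarrow> zigzag n i \<in> {1..int n}"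
  by (cases "even i") (auto elim!: evenE oddE)

lemma abs_diff_zigzag:
  assumes "Suc i < n"
  shows "\<bar>zigzag n (Suc i) - zigzag n i\<bar> = int n - 1 - int i"
proof (cases "even i")
  case True
  then obtain k where "i = 2 * k" by (auto elim: evenE)
  then show ?thesis using assms by simp
next
  case False
  then obtain k where "i = Suc (2 * k)" by (auto elim: oddE)
  moreover have "Suc (Suc (2 * k)) = 2 * Suc k" by simp
  ultimately show ?thesis using assms by (simp only: zigzag_odd zigzag_even)
qed

lemma is_perm_list_zigzag: "is_perm_list n (map (zigzag n) [0..<n])"
proof -
  have "distinct (map (zigzag n) [0..<n])"
    using inj_on_zigzag by (simp add: distinct_map lessThan_atLeast0)
  moreover have "set (map (zigzag n) [0..<n]) = {1..int n}"
  proof (rule card_subset_eq)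
    show "card (set (map (zigzag n) [0..<n])) = card {1..int n}"
      using distinct_card[OF calculation] by simp
  qed (use zigzag_range in auto)
  ultimately show ?thesis
    unfolding is_perm_list_def by simp
qed

lemma distinct_diffs_zigzag: "distinct_diffs (map (zigzag n) [0..<n])"
  unfolding distinct_diffs_def by (auto intro!: inj_onI simp: abs_diff_zigzag)

theorem corollary1:
  fixes n :: nat
  assumes "n \<ge> 1"
  shows "(n mod 4 = 0 \<or> n mod 4 = 1) \<longleftrightarrow>
    (\<forall>a. is_perm_list n a \<and> distinct_diffs a \<longrightarrow> a ! 0 mod 2 = a ! (n - 1) mod 2)"
proof
  assume "n mod 4 = 0 \<or> n mod 4 = 1"
  then show "\<forall>a. is_perm_list n a \<and> distinct_diffs a \<longrightarrow> a ! 0 mod 2 = a ! (n - 1) mod 2"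
    using endpoints_parity_iff[OF _ _ assms] by simp
next
  let ?z = "map (zigzag n) [0..<n]"
  assume "\<forall>a. is_perm_list n a \<and> distinct_diffs a \<longrightarrow> a ! 0 mod 2 = a ! (n - 1) mod 2"
  then have "?z ! 0 mod 2 = ?z ! (n - 1) mod 2"
    using is_perm_list_zigzag distinct_diffs_zigzag by metis
  then show "n mod 4 = 0 \<or> n mod 4 = 1"
    unfolding endpoints_parity_iff[OF is_perm_list_zigzag distinct_diffs_zigzag assms] .
qed

end
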